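(* Let $A\subseteq\mathbb{N}$ be infinite and coinfinite and let $Q=\{X\subseteq\mathbb{N}: X\triangle A \text{ is finite}\}$, a quantifier of type $\langle 1\rangle$. Then the set $\{X\subseteq\mathbb{N}: X\setminus A\text{... }\}$, precisely the set $\{X\subseteq\mathbb{N}: A\setminus X\text{ is finite}\}$, viewed as a subset of the logic space $X_\tau=2^{\mathbb{N}}$ for the signature $\tau$ consisting of one unary relation, is $\mathrm{Aut}(Q)$-invariant but not definable in $\mathscr{L}_{\omega_1\omega}(Q)$.
   Context: A quantifier of type $\langle k\rangle$ on $\mathbb{N}$ is a family $Q$ of subsets of $\mathbb{N}^k$. The logic $\mathscr{L}_{\omega_1\omega}(Q)$ extends $\mathscr{L}_{\omega_1\omega}$ (countable conjunctions/disjunctions, finite quantifier strings) by formulas $Qx\,\varphi(x,y)$, interpreted in a structure $M$ with universe $\mathbb{N}$ by $M\models Qx\,\varphi(x,b)$ iff $\{a:M\models\varphi(a,b)\}\in Q$. A permutation $f$ of $\mathbb{N}$ fixes $Q$ if $B\in Q\iff f(B)\in Q$ for all $B$, where $f(B)=\{f(b):b\in B\}$; $\mathrm{Aut}(Q)$ is the group of such permutations. A set $S\subseteq 2^\mathbb{N}$ (identified with structures $\langle\mathbb{N},X\rangle$ with one unary predicate $X$) is $\mathrm{Aut}(Q)$-invariant if $g(S)=S$ for all $g\in\mathrm{Aut}(Q)$, and definable in $\mathscr{L}_{\omega_1\omega}(Q)$ if there is a sentence $\varphi$ in the signature with one unary predicate such that $X\in S\iff\langle\mathbb{N},X\rangle\models\varphi$.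 *)

theory Defs
  imports Main
begin

text \<open>Formulas of L_{omega_1 omega}(Q) in the signature with one unary predicate X
  (with equality). Countable conjunctions are indexed
  by nat (finite/countable ones by repetition); disjunction, implication, universal
  quantification are definable via negation.\<close>

datatype form =
    FEq nat nat
  | FPred nat
  | FNeg form
  | FConj "nat \<Rightarrow> form"
  | FEx nat form
  | FQ nat form

primrec fv :: "form \<Rightarrow> nat set" where
  "fv (FEq u v) = {u, v}"
| "fv (FPred v) = {v}"
| "fv (FNeg p) = fv p"
| "fv (FConj f) = (\<Union>i. fv (f i))"
| "fv (FEx v p) = fv p - {v}"
| "fv (FQ v p) = fv p - {v}"

primrec sat :: "nat set set \<Rightarrow> nat set \<Rightarrow> (nat \<Rightarrow> nat) \<Rightarrow> form \<Rightarrow> bool" where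
  "sat Q X s (FEq u v) = (s u = s v)"
| "sat Q X s (FPred v) = (s v \<in> X)"
| "sat Q X s (FNeg p) = (\<not> sat Q X s p)"
| "sat Q X s (FConj f) = (\<forall>i. sat Q X s (f i))"
| "sat Q X s (FEx v p) = (\<exists>a. sat Q X (s(v := a)) p)"
| "sat Q X s (FQ v p) = ({a. sat Q X (s(v := a)) p} \<in> Q)"

definition sentence :: "form \<Rightarrow> bool" where
  "sentence p \<longleftrightarrow> fv p = {}"

definition definable :: "nat set set \<Rightarrow> nat set set \<Rightarrow> bool" where
  "definable Q S \<longleftrightarrow> (\<exists>p. sentence p \<and> (\<forall>X s. X \<in> S \<longleftrightarrow> sat Q X s p))"

definition Aut :: "nat set set \<Rightarrow> (nat \<Rightarrow> nat) set" where
  "Aut Q = {f. bij f \<and> (\<forall>B. B \<in> Q \<longleftrightarrow> f ` B \<in> Q)}"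

definition invariant :: "(nat \<Rightarrow> nat) set \<Rightarrow> nat set set \<Rightarrow> bool" where
  "invariant G S \<longleftrightarrow> (\<forall>g\<in>G. (\<lambda>X. g ` X) ` S = S)"

end

theory Submission
  imports Defs "HOL-Library.Countable_Set" "HOL-Combinatorics.Transposition"
begin

(* Let Q be the family of sets almost equal to A.
   Invariance: every g in Aut(Q) maps A to a set almost equal to A, hence
   preserves the property "A - X is finite".
   Non-definability: call a structure X balanced if neither X nor its
   complement lies in Q.  Q contains neither the empty set nor UNIV and is
   closed under finite modifications.  In a balanced structure any set that is
   definable from finitely many parameters P is invariant under all
   automorphisms of (N, X) fixing P, hence agrees outside P with one of
   {}, X, -X, UNIV, so it is not in Q: the quantifier Q is constantly false.
   Consequently every bijection between two balanced structures preserves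
   satisfaction of formulas with finitely many free variables.  Finally
   A u E (which almost contains A) and E (disjoint from A), for E a suitable
   infinite subset of -A, are balanced and isomorphic, so no sentence
   separates them. *)

lemma sat_cong:
  assumes "\<forall>v\<in>fv p. s v = t v"
  shows "sat Q X s p = sat Q X t p"
  using assms
proof (induction p arbitrary: s t)
  case (FConj f)
  have "sat Q X s (f i) = sat Q X t (f i)" for i
    by (rule FConj.IH[OF rangeI]) (use FConj.prems in auto)
  then show ?case by simp
next
  case (FEx v p)
  have "sat Q X (s(v := a)) p = sat Q X (t(v := a)) p" for a
    by (rule FEx.IH) (use FEx.prems in auto)
  then show ?case by simp
next
  case (FQ v p)
  have "sat Q X (s(v := a)) p = sat Q X (t(v := a)) p" for a
    by (rule FQ.IH) (use FQ.prems in auto)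
  then show ?case by simp
qed simp_all

definition coarse :: "'a set set \<Rightarrow> bool" where
  "coarse Q \<longleftrightarrow> {} \<notin> Q \<and> UNIV \<notin> Q \<and>
     (\<forall>D D'. D \<in> Q \<and> finite ((D - D') \<union> (D' - D)) \<longrightarrow> D' \<in> Q)"

definition balanced :: "'a set set \<Rightarrow> 'a set \<Rightarrow> bool" where
  "balanced Q X \<longleftrightarrow> X \<notin> Q \<and> - X \<notin> Q"

definition aut_fixing :: "'a set \<Rightarrow> 'a set \<Rightarrow> ('a \<Rightarrow> 'a) \<Rightarrow> bool" where
  "aut_fixing X P \<pi> \<longleftrightarrow> bij \<pi> \<and> \<pi> ` X = X \<and> (\<forall>x\<in>P. \<pi> x = x)"

lemma saturated_trivial:
  assumes "\<And>x z. (x \<in> X \<longleftrightarrow> z \<in> X) \<Longrightarrow> x \<in> C \<Longrightarrow> z \<in> C"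
  shows "C \<in> {{}, X, - X, UNIV}"
proof -
  have "C = (if X \<inter> C = {} then {} else X) \<union> (if - X \<inter> C = {} then {} else - X)"
    using assms by (auto split: if_splits)
  then show ?thesis by (auto split: if_splits)
qed

text \<open>Transpositions of two points outside P with the same colour show that an
  invariant set agrees outside P with one of the four trivial sets.\<close>

lemma invariant_near_trivial:
  assumes inv: "\<And>\<pi> x. aut_fixing X P \<pi> \<Longrightarrow> x \<in> D \<longleftrightarrow> \<pi> x \<in> D"
  shows "\<exists>C \<in> {{}, X, - X, UNIV}. D - P = C - P"
proof -
  have swap: "z \<in> D" if "y \<in> D" "y \<notin> P" "z \<notin> P" "y \<in> X \<longleftrightarrow> z \<in> X" for y z
  proof -
    have "aut_fixing X P (transpose y z)"
      using that by (auto simp: aut_fixing_def transpose_def)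
    from inv[OF this, of y] show ?thesis
      using that(1) by simp
  qed
  define C where "C = {x. \<exists>y \<in> D - P. y \<in> X \<longleftrightarrow> x \<in> X}"
  have "C \<in> {{}, X, - X, UNIV}"
    by (rule saturated_trivial) (auto simp: C_def)
  moreover have "D - P = C - P"
    using swap by (auto simp: C_def)
  ultimately show ?thesis by blast
qed

lemma invariant_not_in:
  assumes "coarse Q" "balanced Q X" "finite P"
    and "\<And>\<pi> x. aut_fixing X P \<pi> \<Longrightarrow> x \<in> D \<longleftrightarrow> \<pi> x \<in> D"
  shows "D \<notin> Q"
proof
  assume "D \<in> Q"
  obtain C where C: "C \<in> {{}, X, - X, UNIV}" "D - P = C - P"
    using invariant_near_trivial assms(4) by metis
  have "(D - C) \<union> (C - D) \<subseteq> P" using C(2) by blast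
  then have "finite ((D - C) \<union> (C - D))" using assms(3) finite_subset by blast
  then have "C \<in> Q" using \<open>D \<in> Q\<close> assms(1) unfolding coarse_def by blast
  then show False using C(1) assms(1,2) unfolding coarse_def balanced_def by blast
qed

text \<open>If all automorphisms of a balanced structure Y preserve satisfaction of p,
  then the quantifier applied to p is false in Y: the set it quantifies over is
  definable from the finitely many values of the other free variables.\<close>

lemma quantifier_false:
  assumes "coarse Q" "balanced Q Y" "finite (fv p)"
    and iso: "\<And>\<sigma> t. bij \<sigma> \<Longrightarrow> \<sigma> ` Y = Y \<Longrightarrow> sat Q Y t p = sat Q Y (\<sigma> \<circ> t) p"
  shows "\<not> sat Q Y s (FQ v p)"
proof -
  let ?D = "{a. sat Q Y (s(v := a)) p}"
  have "?D \<notin> Q"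
  proof (rule invariant_not_in[OF assms(1,2), of "s ` (fv p - {v})"])
    show "finite (s ` (fv p - {v}))" using assms(3) by simp
    fix \<sigma> a assume \<sigma>: "aut_fixing Y (s ` (fv p - {v})) \<sigma>"
    have "sat Q Y (s(v := a)) p = sat Q Y (\<sigma> \<circ> s(v := a)) p"
      using iso \<sigma> unfolding aut_fixing_def by blast
    also have "\<dots> = sat Q Y (s(v := \<sigma> a)) p"
      by (rule sat_cong) (use \<sigma> in \<open>auto simp: aut_fixing_def\<close>)
    finally show "a \<in> ?D \<longleftrightarrow> \<sigma> a \<in> ?D" by simp
  qed
  then show ?thesis by simp
qed

lemma sat_bij_balanced:
  assumes "finite (fv p)" "bij \<pi>" "\<pi> ` X = X'" "balanced Q X" "balanced Q X'" "coarse Q"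
  shows "sat Q X s p = sat Q X' (\<pi> \<circ> s) p"
  using assms
proof (induction p arbitrary: X X' \<pi> s)
  case (FEq u v)
  then show ?case by (simp add: bij_is_inj inj_eq)
next
  case (FPred v)
  have "\<pi> (s v) \<in> \<pi> ` X \<longleftrightarrow> s v \<in> X" using FPred.prems(2) by (simp add: bij_is_inj inj_image_mem_iff)
  then show ?case using FPred.prems(3) by simp
next
  case (FConj f)
  have "finite (fv (f i))" for i
    using FConj.prems(1) by (rule finite_subset[rotated]) auto
  then have "sat Q X s (f i) = sat Q X' (\<pi> \<circ> s) (f i)" for i
    using FConj.IH[OF rangeI _ FConj.prems(2-)] by blast
  then show ?case by (simp only: sat.simps)
next
  case (FEx v p)
  have fin: "finite (fv p)"
    using FEx.prems(1) by simp
  have "sat Q X (s(v := a)) p = sat Q X' ((\<pi> \<circ> s)(v := \<pi> a)) p" for a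
    using FEx.IH[OF fin FEx.prems(2-), of "s(v := a)"] by (simp only: fun_upd_comp)
  then have "sat Q X s (FEx v p) \<longleftrightarrow> (\<exists>a. sat Q X' ((\<pi> \<circ> s)(v := \<pi> a)) p)"
    by (simp only: sat.simps)
  also have "\<dots> \<longleftrightarrow> (\<exists>b. sat Q X' ((\<pi> \<circ> s)(v := b)) p)"
    using FEx.prems(2) by (metis bij_pointE)
  finally show ?case by (simp only: sat.simps)
next
  case (FQ v p)
  have fin: "finite (fv p)"
    using FQ.prems(1) by simp
  have "\<not> sat Q Y t (FQ v p)" if "balanced Q Y" for Y t
    by (rule quantifier_false[OF FQ.prems(6) that fin], rule FQ.IH)
      (use fin that FQ.prems(6) in auto)
  then show ?case using FQ.prems(4,5) by blast
qed simp

lemma bij_betw_countable_infinite: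
  fixes X :: "'a set" and Y :: "'b set"
  assumes "countable X" "countable Y" "infinite X" "infinite Y"
  shows "\<exists>f. bij_betw f X Y"
  using bij_betw_trans[OF to_nat_on_infinite[OF assms(1,3)] bij_betw_from_nat_into[OF assms(2,4)]]
  by blast

lemma conjugate_infinite_coinfinite:
  fixes X Y :: "'a :: countable set"
  assumes "infinite X" "infinite (- X)" "infinite Y" "infinite (- Y)"
  shows "\<exists>\<pi>. bij \<pi> \<and> \<pi> ` X = Y"
proof -
  obtain g h where g: "bij_betw g X Y" and h: "bij_betw h (- X) (- Y)"
    using bij_betw_countable_infinite assms by (metis countableI_type)
  define \<pi> where "\<pi> x = (if x \<in> X then g x else h x)" for x
  have "bij_betw \<pi> X Y" using g by (rule bij_betw_cong[THEN iffD1, rotated]) (simp add: \<pi>_def)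
  moreover have "bij_betw \<pi> (- X) (- Y)"
    using h by (rule bij_betw_cong[THEN iffD1, rotated]) (simp add: \<pi>_def)
  ultimately have "bij_betw \<pi> (X \<union> - X) (Y \<union> - Y)" "\<pi> ` X = Y"
    using bij_betw_combine bij_betw_imp_surj_on by blast+
  then show ?thesis by auto
qed

lemma infinite_split:
  assumes "infinite B"
  obtains E where "E \<subseteq> B" "infinite E" "infinite (B - E)"
proof -
  obtain C :: "nat \<Rightarrow> _" where C: "pairwise (\<lambda>i j. disjnt (C i) (C j)) UNIV"
    "(\<Union>i. C i) \<subseteq> B" "\<And>i. infinite (C i)"
    using infinite_infinite_partition[OF assms] by blast
  have "C 1 \<subseteq> B - C 0"
    using C(1,2) unfolding pairwise_def disjnt_def by blast
  then have "infinite (B - C 0)" using C(3) finite_subset by blast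
  then show thesis using that[of "C 0"] C by blast
qed

lemma almost_equal_coarse:
  assumes "infinite A" "infinite (- A)"
  shows "coarse {X. finite ((X - A) \<union> (A - X))}"
  unfolding coarse_def
proof (intro conjI allI impI)
  show "{} \<notin> {X. finite ((X - A) \<union> (A - X))}" using assms(1) by simp
  show "UNIV \<notin> {X. finite ((X - A) \<union> (A - X))}" using assms(2) by (simp add: Compl_eq_Diff_UNIV)
  fix D D' assume "D \<in> {X. finite ((X - A) \<union> (A - X))} \<and> finite ((D - D') \<union> (D' - D))"
  then have "finite (((D - A) \<union> (A - D)) \<union> ((D - D') \<union> (D' - D)))" by simp
  moreover have "(D' - A) \<union> (A - D') \<subseteq> ((D - A) \<union> (A - D)) \<union> ((D - D') \<union> (D' - D))" by blast
  ultimately show "D' \<in> {X. finite ((X - A) \<union> (A - X))}" using finite_subset by blast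
qed

lemma almost_superset_image:
  assumes "inj g" "finite ((g ` A - A) \<union> (A - g ` A))"
  shows "finite (A - g ` X) \<longleftrightarrow> finite (A - X)"
proof -
  have moved: "finite (g ` A - A)" "finite (A - g ` A)"
    using assms(2) by simp_all
  have "g ` (A - X) = g ` A - g ` X"
    using assms(1) by (simp add: image_set_diff)
  moreover have "finite (A - g ` X) \<longleftrightarrow> finite (g ` A - g ` X)"
  proof
    assume "finite (A - g ` X)"
    moreover have "g ` A - g ` X \<subseteq> (g ` A - A) \<union> (A - g ` X)" by blast
    ultimately show "finite (g ` A - g ` X)"
      using moved(1) finite_subset by (metis finite_UnI)
  next
    assume "finite (g ` A - g ` X)"
    moreover have "A - g ` X \<subseteq> (A - g ` A) \<union> (g ` A - g ` X)" by blast
    ultimately show "finite (A - g ` X)"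
      using moved(2) finite_subset by (metis finite_UnI)
  qed
  moreover have "finite (g ` (A - X)) \<longleftrightarrow> finite (A - X)"
    using assms(1) by (simp add: finite_image_iff inj_on_subset)
  ultimately show ?thesis by simp
qed

lemma Aut_invariant_almost_superset:
  assumes "Q = {X. finite ((X - A) \<union> (A - X))}"
  shows "invariant (Aut Q) {X. finite (A - X)}"
  unfolding invariant_def
proof
  fix g assume "g \<in> Aut Q"
  then have g: "bij g" "g ` A \<in> Q"
    using assms unfolding Aut_def by auto
  then have iff: "finite (A - g ` X) \<longleftrightarrow> finite (A - X)" for X
    using almost_superset_image[OF bij_is_inj] assms by auto
  have preimage: "g ` (inv g ` X) = X" for X
    using g(1) by (simp add: image_comp bij_is_surj surj_f_inv_f)
  show "(\<lambda>X. g ` X) ` {X. finite (A - X)} = {X. finite (A - X)}"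
  proof (intro equalityI subsetI)
    fix Y assume "Y \<in> (\<lambda>X. g ` X) ` {X. finite (A - X)}"
    then obtain X where "Y = g ` X" "finite (A - X)" by blast
    then show "Y \<in> {X. finite (A - X)}" using iff by simp
  next
    fix Y assume "Y \<in> {X. finite (A - X)}"
    then have "inv g ` Y \<in> {X. finite (A - X)}"
      using iff[of "inv g ` Y"] preimage[of Y] by simp
    then show "Y \<in> (\<lambda>X. g ` X) ` {X. finite (A - X)}"
      using preimage[of Y, symmetric] by (rule rev_image_eqI)
  qed
qed

text \<open>Two conjugate balanced structures, one almost containing A and one missing
  infinitely many points of A: take A \<union> E and E for E \<subseteq> -A infinite with
  infinite complement in -A.\<close>

lemma balanced_separating_pair:
  fixes A :: "'a :: countable set"
  assumes "infinite A" "infinite (- A)" "Q = {X. finite ((X - A) \<union> (A - X))}"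
  obtains X Y \<pi> where "balanced Q X" "balanced Q Y" "bij \<pi>" "\<pi> ` X = Y"
    "finite (A - X)" "infinite (A - Y)"
proof -
  obtain E where E: "E \<subseteq> - A" "infinite E" "infinite (- A - E)"
    using infinite_split[OF assms(2)] by blast
  have AE: "A \<union> E - A = E" "A - - (A \<union> E) = A" "A - E = A" "- E - A = - A - E"
    "- (A \<union> E) = - A - E" "A - (A \<union> E) = {}"
    using E(1) by blast+
  have bal: "balanced Q (A \<union> E)" "balanced Q E"
    using assms(1,3) E(2,3) AE by (auto simp: balanced_def)
  have "infinite (- E)" using E(3) by (rule infinite_super[rotated]) blast
  then obtain \<pi> where "bij \<pi>" "\<pi> ` (A \<union> E) = E"
    using conjugate_infinite_coinfinite[of "A \<union> E" E] assms(1) E AE by auto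
  then show thesis using that[OF bal] assms(1) AE by simp
qed

theorem mainTheorem5:
  fixes A :: "nat set" and Q :: "nat set set"
  assumes "infinite A" and "infinite (- A)"
    and "Q = {X. finite ((X - A) \<union> (A - X))}"
  shows "invariant (Aut Q) {X. finite (A - X)} \<and> \<not> definable Q {X. finite (A - X)}"
proof
  show "invariant (Aut Q) {X. finite (A - X)}"
    using Aut_invariant_almost_superset[OF assms(3)] .
  show "\<not> definable Q {X. finite (A - X)}"
  proof
    assume "definable Q {X. finite (A - X)}"
    then obtain p where p: "fv p = {}" and def: "\<And>X s. finite (A - X) \<longleftrightarrow> sat Q X s p"
      unfolding definable_def sentence_def by blast
    obtain X Y \<pi> where XY: "balanced Q X" "balanced Q Y" "bij \<pi>" "\<pi> ` X = Y"
      "finite (A - X)" "infinite (A - Y)"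
      using balanced_separating_pair[OF assms] by blast
    have "sat Q X id p = sat Q Y \<pi> p"
      using sat_bij_balanced[OF _ XY(3,4,1,2) almost_equal_coarse[OF assms(1,2), folded assms(3)]] p
      by simp
    then show False using def[of X] def[of Y] XY(5,6) by simp
  qed
qed

end
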